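(* Let $d\in\mathbb{N}$, let $A$ be a $d\times d$ reclusive matrix, $\mathcal{P}_{A}$ its reclusive partition, and $\Delta_{A}$ its reclusive distance. Then for every $\vec{p}\in\mathbb{R}^{d}$, $|\mathcal{N}_{\Delta_{A}/2}(\vec{p})|\leq d+1$.
   Context: A $d\times d$ matrix $A=(a_{ij})$ is reclusive if $a_{ij}=0$ for $i>j$, $a_{ii}=1$ for all $i$, and $a_{ij}>a_{ik}>0$ for all $i\le j<k$. Its lattice is $L_A=\{A\vec{v}:\vec{v}\in\mathbb{Z}^d\}$ and its reclusive partition is $\mathcal{P}_A=\{\vec{a}+[0,1)^d:\vec{a}\in L_A\}$ (a partition of $\mathbb{R}^d$). Its reclusive distance is $\Delta_A=\min\{\delta_1,\delta_2,\delta_3,\delta_4\}$ where $\delta_1=1$, $\delta_2=\min_{k\in[d]}\min_{k<j\le d}(1-a_{kj})$, $\delta_3=\min_{k\in[d]}\min_{k<j\le d}a_{kj}$, $\delta_4=\min_{k\in[d]}\min_{k<j<j'\le d}(a_{kj}-a_{kj'})$, with $\min\emptyset=\infty$. On $\mathbb{R}^d$ use $d_{max}(\vec{x},\vec{y})=\max_i|x_i-y_i|$, $\overline{B}_{\epsilon}(\vec{p})=\{\vec{x}:d_{max}(\vec{x},\vec{p})\le\epsilon\}$ and $\mathcal{N}_{\epsilon}(\vec{p})=\{X\in\mathcal{P}_A: X\cap\overline{B}_{\epsilon}(\vec{p})\neq\emptyset\}$. *)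

theory Defs
  imports Complex_Main
begin

text \<open>Convention: indices are 0-based, i.e. [d] is rendered as {0..<d}.
  A point of R^d is a function nat => real vanishing outside {0..<d};
  a d x d matrix is a function nat => nat => real (only entries with
  indices < d matter).\<close>

definition Rd :: "nat \<Rightarrow> (nat \<Rightarrow> real) set" where
  "Rd d = {x. \<forall>i\<ge>d. x i = 0}"

definition reclusive :: "nat \<Rightarrow> (nat \<Rightarrow> nat \<Rightarrow> real) \<Rightarrow> bool" where
  "reclusive d A \<longleftrightarrow>
     (\<forall>i<d. \<forall>j<d. j < i \<longrightarrow> A i j = 0) \<and>
     (\<forall>i<d. A i i = 1) \<and>
     (\<forall>i j k. i \<le> j \<and> j < k \<and> k < d \<longrightarrow> A i j > A i k \<and> A i k > 0)"

definition mat_vec :: "nat \<Rightarrow> (nat \<Rightarrow> nat \<Rightarrow> real) \<Rightarrow> (nat \<Rightarrow> int) \<Rightarrow> (nat \<Rightarrow> real)" where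
  "mat_vec d A v = (\<lambda>i. if i < d then (\<Sum>j<d. A i j * real_of_int (v j)) else 0)"

definition lattice :: "nat \<Rightarrow> (nat \<Rightarrow> nat \<Rightarrow> real) \<Rightarrow> (nat \<Rightarrow> real) set" where
  "lattice d A = {mat_vec d A v | v. True}"

definition unit_cell :: "nat \<Rightarrow> (nat \<Rightarrow> real) \<Rightarrow> (nat \<Rightarrow> real) set" where
  "unit_cell d a = {x \<in> Rd d. \<forall>i<d. a i \<le> x i \<and> x i < a i + 1}"

definition reclusive_partition :: "nat \<Rightarrow> (nat \<Rightarrow> nat \<Rightarrow> real) \<Rightarrow> (nat \<Rightarrow> real) set set" where
  "reclusive_partition d A = unit_cell d ` lattice d A"

definition reclusive_distance :: "nat \<Rightarrow> (nat \<Rightarrow> nat \<Rightarrow> real) \<Rightarrow> real" where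
  "reclusive_distance d A = Min ({1}
      \<union> {1 - A k j | k j. k < j \<and> j < d}
      \<union> {A k j | k j. k < j \<and> j < d}
      \<union> {A k j - A k j' | k j j'. k < j \<and> j < j' \<and> j' < d})"

definition max_cball :: "nat \<Rightarrow> (nat \<Rightarrow> real) \<Rightarrow> real \<Rightarrow> (nat \<Rightarrow> real) set" where
  "max_cball d p e = {x \<in> Rd d. \<forall>i<d. \<bar>x i - p i\<bar> \<le> e}"

definition neighbourhood :: "nat \<Rightarrow> (nat \<Rightarrow> nat \<Rightarrow> real) \<Rightarrow> real \<Rightarrow> (nat \<Rightarrow> real) \<Rightarrow> (nat \<Rightarrow> real) set set" where
  "neighbourhood d A e p = {X \<in> reclusive_partition d A. X \<inter> max_cball d p e \<noteq> {}}"

end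

theory Submission
  imports Defs
begin

(* Write Delta for the reclusive distance. A cell of the partition is A t + [0,1)^d for an integer
   vector t. Because A is upper unitriangular, the cells meeting the ball of radius Delta/2 around p,
   restricted to the coordinates i, ..., d-1, are cells of the analogous partition for the
   lower-right block of A. Passing from i+1 to i, the new coefficient t_i is determined by the
   others unless row i of A t exceeds p_i - Delta/2, and there is at most one such exceptional
   cell: two of them would differ by a nonzero integer vector u whose rows j > i are below
   1 + Delta in absolute value while row i is below Delta. A downward induction on m rules this
   out: the strict decrease along the rows of A, with all gaps at least Delta, keeps every tail
   sum sum_{l >= m} A_jl u_l (j < m) either zero or, up to one common sign, inside
   [Delta, A_jm], and the tail at m = i+1 then forces |row i of A u| >= Delta. So each coordinate
   adds at most one cell, d + 1 in total. *)

lemma reclusive_distance_bounds: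
  assumes "reclusive d A"
  shows reclusive_distance_pos: "0 < reclusive_distance d A"
    and reclusive_distance_le_one: "reclusive_distance d A \<le> 1"
    and reclusive_distance_le_one_minus:
      "\<And>k j. k < j \<Longrightarrow> j < d \<Longrightarrow> reclusive_distance d A \<le> 1 - A k j"
    and reclusive_distance_le_entry:
      "\<And>k j. k < j \<Longrightarrow> j < d \<Longrightarrow> reclusive_distance d A \<le> A k j"
    and reclusive_distance_le_diff:
      "\<And>k j j'. k < j \<Longrightarrow> j < j' \<Longrightarrow> j' < d \<Longrightarrow> reclusive_distance d A \<le> A k j - A k j'"
proof -
  define S where "S = {1}
      \<union> {1 - A k j | k j. k < j \<and> j < d}
      \<union> {A k j | k j. k < j \<and> j < d}
      \<union> {A k j - A k j' | k j j'. k < j \<and> j < j' \<and> j' < d}"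
  have fin2: "finite {f k j | k j. k < j \<and> j < d}" for f :: "nat \<Rightarrow> nat \<Rightarrow> real"
    by (rule finite_subset[of _ "(\<lambda>(k, j). f k j) ` ({..<d} \<times> {..<d})"]) force+
  have fin3: "finite {f k j j' | k j j'. k < j \<and> j < j' \<and> j' < d}"
    for f :: "nat \<Rightarrow> nat \<Rightarrow> nat \<Rightarrow> real"
    by (rule finite_subset[of _ "(\<lambda>(k, j, j'). f k j j') ` ({..<d} \<times> {..<d} \<times> {..<d})"])
      (force simp: image_iff)+
  have fin: "finite S"
    using fin2[of "\<lambda>k j. 1 - A k j"] fin2[of A] fin3[of "\<lambda>k j j'. A k j - A k j'"]
    by (simp add: S_def)
  have D: "reclusive_distance d A = Min S" unfolding reclusive_distance_def S_def ..
  show "reclusive_distance d A \<le> 1" unfolding D by (rule Min_le[OF fin]) (simp add: S_def)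
  show "\<And>k j. k < j \<Longrightarrow> j < d \<Longrightarrow> reclusive_distance d A \<le> 1 - A k j"
    unfolding D by (rule Min_le[OF fin]) (auto simp: S_def)
  show "\<And>k j. k < j \<Longrightarrow> j < d \<Longrightarrow> reclusive_distance d A \<le> A k j"
    unfolding D by (rule Min_le[OF fin]) (auto simp: S_def)
  show "\<And>k j j'. k < j \<Longrightarrow> j < j' \<Longrightarrow> j' < d \<Longrightarrow> reclusive_distance d A \<le> A k j - A k j'"
    unfolding D by (rule Min_le[OF fin]) (auto simp: S_def)
  have entry: "0 < A k j \<and> A k j < 1" if "k < j" "j < d" for k j
    using assms that unfolding reclusive_def by (metis order.refl order.strict_trans)
  have diff: "A k j' < A k j" if "k < j" "j < j'" "j' < d" for k j j'
    using assms that unfolding reclusive_def by auto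
  have "\<forall>a\<in>S. 0 < a" unfolding S_def using entry diff by auto
  then show "0 < reclusive_distance d A" unfolding D using fin by (simp add: S_def Min_gr_iff)
qed

lemma mat_vec_diff: "mat_vec d A (u - v) = mat_vec d A u - mat_vec d A v"
  by (rule ext) (simp add: mat_vec_def algebra_simps sum_subtractf)

lemma mat_vec_uminus: "mat_vec d A (- u) = - mat_vec d A u"
  by (rule ext) (simp add: mat_vec_def sum_negf)

lemma mat_vec_fun_upd:
  assumes "i < d" "j < d"
  shows "mat_vec d A (v(i := a)) j = mat_vec d A v j + A j i * of_int (a - v i)"
proof -
  have "i \<in> {..<d}" using assms(1) by simp
  then have "mat_vec d A (v(i := a)) j - mat_vec d A v j
      = A j i * of_int a - A j i * of_int (v i)"
    using assms(2) by (simp add: mat_vec_def sum.remove[of "{..<d}" i])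
  then show ?thesis by (simp add: algebra_simps)
qed

definition tail_sum :: "nat \<Rightarrow> (nat \<Rightarrow> nat \<Rightarrow> real) \<Rightarrow> (nat \<Rightarrow> int) \<Rightarrow> nat \<Rightarrow> nat \<Rightarrow> real"
  where
  "tail_sum d A u j m = (\<Sum>l\<in>{m..<d}. A j l * of_int (u l))"

lemma tail_sum_Suc:
  "m < d \<Longrightarrow> tail_sum d A u j m = A j m * of_int (u m) + tail_sum d A u j (Suc m)"
  unfolding tail_sum_def by (simp add: sum.atLeast_Suc_lessThan)

lemma tail_sum_uminus: "tail_sum d A (- u) j m = - tail_sum d A u j m"
  by (simp add: tail_sum_def sum_negf)

lemma tail_sum_eq_0: "\<forall>l\<in>{m..<d}. u l = 0 \<Longrightarrow> tail_sum d A u j m = 0"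
  by (simp add: tail_sum_def)

lemma mat_vec_eq_tail_sum:
  assumes "reclusive d A" "j < d"
  shows "mat_vec d A u j = of_int (u j) + tail_sum d A u j (Suc j)"
proof -
  have "(\<Sum>l<d. A j l * of_int (u l))
      = (\<Sum>l<j. A j l * of_int (u l)) + (\<Sum>l\<in>{j..<d}. A j l * of_int (u l))"
    using assms(2) by (subst sum.union_disjoint[symmetric]) (auto intro: sum.cong)
  moreover have "(\<Sum>l<j. A j l * of_int (u l)) = 0" using assms unfolding reclusive_def by simp
  moreover have "A j j = 1" using assms unfolding reclusive_def by simp
  ultimately show ?thesis
    using assms(2) tail_sum_Suc[OF assms(2), of A u j] by (simp add: mat_vec_def tail_sum_def)
qed

definition tail_in_gap :: "nat \<Rightarrow> (nat \<Rightarrow> nat \<Rightarrow> real) \<Rightarrow> (nat \<Rightarrow> int) \<Rightarrow> nat \<Rightarrow> bool"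
  where
  "tail_in_gap d A u m \<longleftrightarrow> m < d \<and>
     (\<forall>j<m. reclusive_distance d A \<le> tail_sum d A u j m \<and> tail_sum d A u j m \<le> A j m)"

lemma tail_in_gap_start:
  assumes R: "reclusive d A" and m: "m < d" and "u m = 1" and "\<forall>l\<in>{Suc m..<d}. u l = 0"
  shows "tail_in_gap d A u m"
proof -
  have "tail_sum d A u j m = A j m" for j
    using assms by (simp add: tail_sum_Suc[OF m] tail_sum_eq_0)
  then show ?thesis
    unfolding tail_in_gap_def using m reclusive_distance_le_entry[OF R] by simp
qed

lemma tail_in_gap_step:
  assumes R: "reclusive d A" and m: "m < d" and gap: "tail_in_gap d A u (Suc m)"
    and row: "\<bar>mat_vec d A u m\<bar> < 1 + reclusive_distance d A"
  shows "tail_in_gap d A u m \<or> tail_in_gap d A (- u) m"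
proof -
  define D where "D = reclusive_distance d A"
  define T where "T j = tail_sum d A u j (Suc m)" for j
  have m': "Suc m < d" and T: "\<And>j. j < Suc m \<Longrightarrow> D \<le> T j \<and> T j \<le> A j (Suc m)"
    using gap unfolding tail_in_gap_def T_def D_def by auto
  have "T m \<le> 1 - D"
    using T[of m] reclusive_distance_le_one_minus[OF R, of m "Suc m"] m' unfolding D_def by simp
  moreover have "mat_vec d A u m = of_int (u m) + T m"
    unfolding T_def by (rule mat_vec_eq_tail_sum[OF R m])
  ultimately have "- 2 < real_of_int (u m)" "real_of_int (u m) < 1"
    using row T[of m] unfolding D_def by (auto simp: abs_less_iff)
  then have "u m = 0 \<or> u m = -1" by linarith
  then show ?thesis
  proof
    assume "u m = 0"
    then have "tail_sum d A u j m = T j" for j unfolding T_def by (simp add: tail_sum_Suc[OF m])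
    moreover have "A j (Suc m) < A j m" if "j < m" for j
      using R that m' unfolding reclusive_def by simp
    ultimately have "D \<le> tail_sum d A u j m \<and> tail_sum d A u j m \<le> A j m" if "j < m" for j
      using T[of j] that by fastforce
    then have "tail_in_gap d A u m" unfolding tail_in_gap_def D_def using m by blast
    then show ?thesis ..
  next
    assume "u m = -1"
    then have "tail_sum d A (- u) j m = A j m - T j" for j
      unfolding T_def by (simp add: tail_sum_uminus tail_sum_Suc[OF m])
    moreover have "D \<le> A j m - A j (Suc m)" if "j < m" for j
      using reclusive_distance_le_diff[OF R that _ m'] unfolding D_def by simp
    ultimately have "D \<le> tail_sum d A (- u) j m \<and> tail_sum d A (- u) j m \<le> A j m"
      if "j < m" for j
      using T[of j] that reclusive_distance_pos[OF R] unfolding D_def by fastforce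
    then have "tail_in_gap d A (- u) m" unfolding tail_in_gap_def D_def using m by blast
    then show ?thesis ..
  qed
qed

lemma tail_zero_step:
  assumes R: "reclusive d A" and n: "n < d" and zero: "\<forall>l\<in>{Suc n..<d}. u l = 0"
    and row: "\<bar>mat_vec d A u n\<bar> < 1 + reclusive_distance d A"
  shows "(\<forall>l\<in>{n..<d}. u l = 0) \<or> tail_in_gap d A u n \<or> tail_in_gap d A (- u) n"
proof -
  have "mat_vec d A u n = of_int (u n)"
    using zero mat_vec_eq_tail_sum[OF R n] by (simp add: tail_sum_eq_0)
  then have "\<bar>real_of_int (u n)\<bar> < 2" using row reclusive_distance_le_one[OF R] by simp
  then consider "u n = 0" | "u n = 1" | "u n = -1" by linarith
  then show ?thesis
  proof cases
    case 1
    then have "\<forall>l\<in>{n..<d}. u l = 0" using zero by (metis atLeastLessThan_iff le_antisym not_less_eq_eq)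
    then show ?thesis ..
  next
    case 2
    then show ?thesis using tail_in_gap_start[OF R n] zero by blast
  next
    case 3
    then have "(- u) n = 1" "\<forall>l\<in>{Suc n..<d}. (- u) l = 0" using zero by auto
    then show ?thesis using tail_in_gap_start[OF R n] by blast
  qed
qed

lemma tail_dichotomy:
  assumes R: "reclusive d A" and "m \<le> d"
    and rows: "\<forall>j\<in>{m..<d}. \<bar>mat_vec d A u j\<bar> < 1 + reclusive_distance d A"
  shows "(\<forall>l\<in>{m..<d}. u l = 0) \<or> tail_in_gap d A u m \<or> tail_in_gap d A (- u) m"
  using assms(2) rows
proof (induction m rule: inc_induct)
  case base
  then show ?case by simp
next
  case (step n)
  have row: "\<bar>mat_vec d A u n\<bar> < 1 + reclusive_distance d A" using step.prems step.hyps by simp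
  have "(\<forall>l\<in>{Suc n..<d}. u l = 0) \<or> tail_in_gap d A u (Suc n) \<or> tail_in_gap d A (- u) (Suc n)"
    using step.prems by (intro step.IH) auto
  then consider (zero) "\<forall>l\<in>{Suc n..<d}. u l = 0" | (pos) "tail_in_gap d A u (Suc n)"
    | (neg) "tail_in_gap d A (- u) (Suc n)" by blast
  then show ?case
  proof cases
    case zero
    then show ?thesis using tail_zero_step[OF R step.hyps(2) _ row] by blast
  next
    case pos
    then show ?thesis using tail_in_gap_step[OF R step.hyps(2) pos row] by blast
  next
    case neg
    have "\<bar>mat_vec d A (- u) n\<bar> < 1 + reclusive_distance d A" using row by (simp add: mat_vec_uminus)
    moreover have "- (- u) = u" by (simp add: fun_eq_iff)
    ultimately show ?thesis using tail_in_gap_step[OF R step.hyps(2) neg] by metis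
  qed
qed

lemma reclusive_row_separation:
  assumes R: "reclusive d A" and i: "i < d" and nz: "\<exists>j\<in>{i..<d}. u j \<noteq> 0"
    and rows: "\<forall>j\<in>{Suc i..<d}. \<bar>mat_vec d A u j\<bar> < 1 + reclusive_distance d A"
  shows "reclusive_distance d A \<le> \<bar>mat_vec d A u i\<bar>"
proof -
  define D where "D = reclusive_distance d A"
  have gap_row: "D \<le> \<bar>mat_vec d A v i\<bar>" if "tail_in_gap d A v (Suc i)" for v
  proof -
    define T where "T = tail_sum d A v i (Suc i)"
    have "D \<le> T" "T \<le> 1 - D"
      using that reclusive_distance_le_one_minus[OF R, of i "Suc i"]
      unfolding tail_in_gap_def T_def D_def by force+
    moreover have "mat_vec d A v i = of_int (v i) + T"
      unfolding T_def by (rule mat_vec_eq_tail_sum[OF R i])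
    moreover have "0 \<le> v i \<or> v i \<le> -1" by linarith
    ultimately show ?thesis by (auto simp: abs_if)
  qed
  have "(\<forall>l\<in>{Suc i..<d}. u l = 0) \<or> tail_in_gap d A u (Suc i) \<or> tail_in_gap d A (- u) (Suc i)"
    using tail_dichotomy[OF R _ rows] i by simp
  then consider (zero) "\<forall>l\<in>{Suc i..<d}. u l = 0" | (pos) "tail_in_gap d A u (Suc i)"
    | (neg) "tail_in_gap d A (- u) (Suc i)" by blast
  then show ?thesis
  proof cases
    case zero
    then have "u i \<noteq> 0" using nz by (metis Suc_leI atLeastLessThan_iff le_neq_implies_less)
    moreover have "mat_vec d A u i = of_int (u i)"
      using zero mat_vec_eq_tail_sum[OF R i] by (simp add: tail_sum_eq_0)
    ultimately show ?thesis using reclusive_distance_le_one[OF R] by linarith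
  next
    case pos
    then show ?thesis using gap_row unfolding D_def by blast
  next
    case neg
    then show ?thesis using gap_row[of "- u"] unfolding D_def by (simp add: mat_vec_uminus)
  qed
qed

(* Coefficient vectors supported on {i..<d} of the cells, in coordinates i, ..., d-1, that meet
   the ball around p; for i = 0 these index the neighbourhood. *)
definition near_coeffs :: "nat \<Rightarrow> (nat \<Rightarrow> nat \<Rightarrow> real) \<Rightarrow> (nat \<Rightarrow> real) \<Rightarrow> nat \<Rightarrow> (nat \<Rightarrow> int) set"
  where
  "near_coeffs d A p i = {t. (\<forall>j. j \<notin> {i..<d} \<longrightarrow> t j = 0) \<and>
     (\<exists>x\<in>max_cball d p (reclusive_distance d A / 2).
        \<forall>j\<in>{i..<d}. mat_vec d A t j \<le> x j \<and> x j < mat_vec d A t j + 1)}"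

lemma near_coeffs_row_bounds:
  assumes "t \<in> near_coeffs d A p i" and "j \<in> {i..<d}"
  shows "p j - reclusive_distance d A / 2 - 1 < mat_vec d A t j"
    and "mat_vec d A t j \<le> p j + reclusive_distance d A / 2"
proof -
  obtain x where "\<bar>x j - p j\<bar> \<le> reclusive_distance d A / 2"
    and "mat_vec d A t j \<le> x j" "x j < mat_vec d A t j + 1"
    using assms unfolding near_coeffs_def max_cball_def by auto
  then show "p j - reclusive_distance d A / 2 - 1 < mat_vec d A t j"
    and "mat_vec d A t j \<le> p j + reclusive_distance d A / 2"
    unfolding abs_le_iff by linarith+
qed

lemma near_coeffs_drop:
  assumes R: "reclusive d A" and i: "i < d" and r: "r \<in> near_coeffs d A p i"
  shows "r(i := 0) \<in> near_coeffs d A p (Suc i)"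
proof -
  obtain x where x: "x \<in> max_cball d p (reclusive_distance d A / 2)"
    and rows: "\<forall>j\<in>{i..<d}. mat_vec d A r j \<le> x j \<and> x j < mat_vec d A r j + 1"
    using r unfolding near_coeffs_def by blast
  have "mat_vec d A (r(i := 0)) j = mat_vec d A r j" if "j \<in> {Suc i..<d}" for j
    using R that mat_vec_fun_upd[OF i, of j A r 0] unfolding reclusive_def by simp
  with rows have "\<forall>j\<in>{Suc i..<d}.
      mat_vec d A (r(i := 0)) j \<le> x j \<and> x j < mat_vec d A (r(i := 0)) j + 1"
    by simp
  with x r show ?thesis unfolding near_coeffs_def by auto
qed

lemma near_coeffs_low_inj:
  assumes R: "reclusive d A" and i: "i < d"
  shows "inj_on (\<lambda>r. r(i := 0))
    {r \<in> near_coeffs d A p i. mat_vec d A r i \<le> p i - reclusive_distance d A / 2}"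
    (is "inj_on _ ?L")
proof (rule inj_onI)
  fix r r' assume r: "r \<in> ?L" and r': "r' \<in> ?L" and eq: "r(i := 0) = r'(i := 0)"
  have bounds: "p i - reclusive_distance d A / 2 - 1 < mat_vec d A t i \<and>
      mat_vec d A t i \<le> p i - reclusive_distance d A / 2" if "t \<in> ?L" for t
    using that near_coeffs_row_bounds(1)[of t] i by auto
  have upd: "r' = r(i := r' i)" using eq by (metis fun_upd_triv fun_upd_upd)
  have "A i i = 1" using R i unfolding reclusive_def by simp
  then have "mat_vec d A r' i = mat_vec d A r i + of_int (r' i - r i)"
    using mat_vec_fun_upd[OF i i, of A r "r' i"] upd by simp
  with bounds[OF r] bounds[OF r'] have "\<bar>real_of_int (r' i - r i)\<bar> < 1"
    unfolding abs_less_iff by linarith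
  then have "r' i = r i" by linarith
  then show "r = r'" using upd by simp
qed

lemma near_coeffs_high_unique:
  assumes R: "reclusive d A" and i: "i < d"
    and r: "r \<in> near_coeffs d A p i" "p i - reclusive_distance d A / 2 < mat_vec d A r i"
    and r': "r' \<in> near_coeffs d A p i" "p i - reclusive_distance d A / 2 < mat_vec d A r' i"
  shows "r = r'"
proof (rule ccontr)
  assume "r \<noteq> r'"
  then obtain j where "r j \<noteq> r' j" by (auto simp: fun_eq_iff)
  moreover have "r j = 0 \<and> r' j = 0" if "j \<notin> {i..<d}" for j
    using r(1) r'(1) that unfolding near_coeffs_def by blast
  ultimately have nz: "\<exists>j\<in>{i..<d}. (r - r') j \<noteq> 0" by force
  have bounds: "p j - reclusive_distance d A / 2 - 1 < mat_vec d A t j \<and>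
      mat_vec d A t j \<le> p j + reclusive_distance d A / 2"
    if "t \<in> near_coeffs d A p i" "j \<in> {i..<d}" for t j
    using near_coeffs_row_bounds[OF that] by simp
  have "\<bar>mat_vec d A (r - r') j\<bar> < 1 + reclusive_distance d A" if "j \<in> {Suc i..<d}" for j
  proof -
    have "j \<in> {i..<d}" using that by simp
    from bounds[OF r(1) this] bounds[OF r'(1) this] show ?thesis
      by (simp add: mat_vec_diff abs_less_iff)
  qed
  then have "reclusive_distance d A \<le> \<bar>mat_vec d A (r - r') i\<bar>"
    using reclusive_row_separation[OF R i nz] by blast
  then have "reclusive_distance d A \<le> \<bar>mat_vec d A r i - mat_vec d A r' i\<bar>"
    unfolding mat_vec_diff by simp
  moreover have "\<bar>mat_vec d A r i - mat_vec d A r' i\<bar> < reclusive_distance d A"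
    using r r' bounds[OF r(1), of i] bounds[OF r'(1), of i] i by (simp add: abs_less_iff)
  ultimately show False by simp
qed

lemma card_near_coeffs_step:
  assumes R: "reclusive d A" and i: "i < d" and fin: "finite (near_coeffs d A p (Suc i))"
  shows "finite (near_coeffs d A p i) \<and>
    card (near_coeffs d A p i) \<le> card (near_coeffs d A p (Suc i)) + 1"
proof -
  define c where "c = p i - reclusive_distance d A / 2"
  define L where "L = {r \<in> near_coeffs d A p i. mat_vec d A r i \<le> c}"
  define H where "H = {r \<in> near_coeffs d A p i. c < mat_vec d A r i}"
  have inj: "inj_on (\<lambda>r. r(i := 0)) L"
    unfolding L_def c_def by (rule near_coeffs_low_inj[OF R i])
  have into: "(\<lambda>r. r(i := 0)) ` L \<subseteq> near_coeffs d A p (Suc i)"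
    unfolding L_def using near_coeffs_drop[OF R i] by blast
  have finL: "finite L" using inj_on_finite[OF inj into fin] .
  have cardL: "card L \<le> card (near_coeffs d A p (Suc i))" using card_inj_on_le[OF inj into fin] .
  have single: "\<forall>r\<in>H. \<forall>r'\<in>H. r = r'"
    unfolding H_def c_def using near_coeffs_high_unique[OF R i] by blast
  then have finH: "finite H"
    by (metis finite.emptyI finite_insert is_singletonI' is_singleton_the_elem)
  have cardH: "card H \<le> 1" using single finH by (simp add: card_le_Suc0_iff_eq)
  have "near_coeffs d A p i = L \<union> H" unfolding L_def H_def by auto
  then show ?thesis using finL finH cardL cardH card_Un_le[of L H] by simp
qed

lemma card_near_coeffs:
  assumes R: "reclusive d A" and "i \<le> d"
  shows "finite (near_coeffs d A p i) \<and> card (near_coeffs d A p i) \<le> d - i + 1"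
  using assms(2)
proof (induction i rule: inc_induct)
  case base
  have sub: "near_coeffs d A p d \<subseteq> {\<lambda>_. 0}" unfolding near_coeffs_def by auto
  then have "finite (near_coeffs d A p d)" by (rule finite_subset) simp
  moreover have "card (near_coeffs d A p d) \<le> 1" using card_mono[OF _ sub] by simp
  ultimately show ?case by simp
next
  case (step i)
  have "d - Suc i + 1 + 1 = d - i + 1" using step.hyps(2) by simp
  with step.IH show ?case using card_near_coeffs_step[OF R step.hyps(2), of p] by auto
qed

lemma neighbourhood_subset_near_coeffs:
  "neighbourhood d A (reclusive_distance d A / 2) p
     \<subseteq> (\<lambda>t. unit_cell d (mat_vec d A t)) ` near_coeffs d A p 0"
proof
  fix X assume "X \<in> neighbourhood d A (reclusive_distance d A / 2) p"
  then obtain v x where X: "X = unit_cell d (mat_vec d A v)" and "x \<in> X"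
    and ball: "x \<in> max_cball d p (reclusive_distance d A / 2)"
    unfolding neighbourhood_def reclusive_partition_def lattice_def by blast
  define t where "t j = (if j < d then v j else 0)" for j
  have mv: "mat_vec d A t = mat_vec d A v" unfolding mat_vec_def t_def by auto
  have "t \<in> near_coeffs d A p 0"
    unfolding near_coeffs_def
  proof (intro CollectI conjI allI impI bexI[OF _ ball] ballI)
    show "t j = 0" if "j \<notin> {0..<d}" for j using that by (simp add: t_def)
    show "mat_vec d A t j \<le> x j" "x j < mat_vec d A t j + 1" if "j \<in> {0..<d}" for j
      using \<open>x \<in> X\<close> that unfolding X unit_cell_def mv by auto
  qed
  then show "X \<in> (\<lambda>t. unit_cell d (mat_vec d A t)) ` near_coeffs d A p 0"
    unfolding X mv[symmetric] by blast
qed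

theorem mainTheorem10:
  fixes d :: nat and A :: "nat \<Rightarrow> nat \<Rightarrow> real" and p :: "nat \<Rightarrow> real"
  assumes "reclusive d A"
    and "p \<in> Rd d"
  shows "finite (neighbourhood d A (reclusive_distance d A / 2) p) \<and>
         card (neighbourhood d A (reclusive_distance d A / 2) p) \<le> d + 1"
proof -
  let ?N = "neighbourhood d A (reclusive_distance d A / 2) p"
  let ?cell = "\<lambda>t. unit_cell d (mat_vec d A t)"
  have near: "finite (near_coeffs d A p 0)" "card (near_coeffs d A p 0) \<le> d + 1"
    using card_near_coeffs[OF assms(1), of 0] by simp_all
  have "finite ?N"
    using neighbourhood_subset_near_coeffs near(1) by (rule finite_subset[OF _ finite_imageI])
  moreover have "card ?N \<le> card (?cell ` near_coeffs d A p 0)"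
    using near(1) neighbourhood_subset_near_coeffs by (rule card_mono[OF finite_imageI])
  moreover have "card (?cell ` near_coeffs d A p 0) \<le> card (near_coeffs d A p 0)"
    by (rule card_image_le[OF near(1)])
  ultimately show ?thesis using near(2) by linarith
qed

end
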